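(* Let $\mathfrak{g}$ be the following computad. - Objects: $\mathsf{0},\mathsf{1},\mathsf{2}$. - Arrows: $d\colon\mathsf{0}\to\mathsf{1}$, $d^0,d^1\colon\mathsf{1}\to\mathsf{2}$, and $s^0\colon\mathsf{2}\to\mathsf{1}$. - $2$-cells: $n_0\colon s^0 d^0\Rightarrow \mathrm{id}_{\mathsf{1}}$, $n_1\colon \mathrm{id}_{\mathsf{1}}\Rightarrow s^0 d^1$, and $\vartheta\colon d^1 d\Rightarrow d^0 d$. Then the locally thin $2$-category $\overline{\mathcal{M}_2}\mathcal{F}_2(\mathfrak{g})$ is not a free $2$-category. In particular, $\mathcal{F}_2(\mathfrak{g})$ and $\overline{\mathcal{L}_2}\mathcal{F}_2(\mathfrak{g})$ are not locally thin.
   Context: A computad consists of a small graph $G$ and a set of $2$-cells $\alpha$, each given by a pair of parallel morphisms $\alpha\colon f\Rightarrow g$ in the free category on $G$. $\mathcal{F}_2(\mathfrak{g})$ is the $2$-category freely generated by the computad $\mathfrak{g}$. Its underlying category is the free category on the graph. Its $2$-cells are freely generated by the given $2$-cells under vertical and horizontal composition and whiskering, subject only to the $2$-category axioms. A $2$-category is free if it is isomorphic to $\mathcal{F}_2(\mathfrak{h})$ for some computad $\mathfrak{h}$. $\overline{\mathcal{L}_2}$ is the left adjoint to the inclusion of locally groupoidal $2$-categories (all $2$-cells invertible) into $2$-categories; it freely inverts $2$-cells. $\overline{\mathcal{M}_2}$ is the left adjoint to the inclusion of locally thin $2$-categories (each hom-category has at most one $2$-cell between any two $1$-cells) into $2$-categories;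 it identifies parallel $2$-cells. *)

theory Defs
  imports Main
begin

text \<open>Underlying 1-category: objects, arrows, domain, codomain, identities,
  composition (cmp g f = g after f, defined when cod f = dom g).\<close>
record ('o,'a) cat1 =
  ob  :: "'o set"
  ar  :: "'a set"
  dom :: "'a \<Rightarrow> 'o"
  cod :: "'a \<Rightarrow> 'o"
  idn :: "'o \<Rightarrow> 'a"
  cmp :: "'a \<Rightarrow> 'a \<Rightarrow> 'a"

text \<open>A 2-category: additionally 2-cells with source/target 1-cells,
  identity 2-cells, vertical composition (vc b a = b after a, when t2 a = s2 b)
  and horizontal composition (hc b a, for a : f => g : X -> Y and
  b : h => k : Y -> Z, giving h f => k g).\<close>
record ('o,'a,'c) cat2 = "('o,'a) cat1" +
  cl  :: "'c set"
  s2  :: "'c \<Rightarrow> 'a"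
  t2  :: "'c \<Rightarrow> 'a"
  id2 :: "'a \<Rightarrow> 'c"
  vc  :: "'c \<Rightarrow> 'c \<Rightarrow> 'c"
  hc  :: "'c \<Rightarrow> 'c \<Rightarrow> 'c"

definition loc_thin :: "('o,'a,'c,'m) cat2_scheme \<Rightarrow> bool" where
  "loc_thin C \<longleftrightarrow> (\<forall>a\<in>cl C. \<forall>b\<in>cl C. s2 C a = s2 C b \<and> t2 C a = t2 C b \<longrightarrow> a = b)"

definition iso2 :: "('o,'a,'c) cat2 \<Rightarrow> ('p,'b,'d) cat2 \<Rightarrow> bool" where
  "iso2 C D \<longleftrightarrow> (\<exists>F0 F1 F2.
     bij_betw F0 (ob C) (ob D) \<and> bij_betw F1 (ar C) (ar D) \<and> bij_betw F2 (cl C) (cl D) \<and>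
     (\<forall>f\<in>ar C. dom D (F1 f) = F0 (dom C f) \<and> cod D (F1 f) = F0 (cod C f)) \<and>
     (\<forall>x\<in>ob C. F1 (idn C x) = idn D (F0 x)) \<and>
     (\<forall>f\<in>ar C. \<forall>g\<in>ar C. cod C f = dom C g \<longrightarrow> F1 (cmp C g f) = cmp D (F1 g) (F1 f)) \<and>
     (\<forall>a\<in>cl C. s2 D (F2 a) = F1 (s2 C a) \<and> t2 D (F2 a) = F1 (t2 C a)) \<and>
     (\<forall>f\<in>ar C. F2 (id2 C f) = id2 D (F1 f)) \<and>
     (\<forall>a\<in>cl C. \<forall>b\<in>cl C. t2 C a = s2 C b \<longrightarrow> F2 (vc C b a) = vc D (F2 b) (F2 a)) \<and>
     (\<forall>a\<in>cl C. \<forall>b\<in>cl C. cod C (s2 C a) = dom C (s2 C b) \<longrightarrow>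
          F2 (hc C b a) = hc D (F2 b) (F2 a)))"

text \<open>Formal 2-cell expressions over a base 1-category with 1-cells of type 'a
  and generating 2-cells of type 'x; Iv x is a formal inverse of x.\<close>
datatype ('a,'x) tm = At 'x | Iv 'x | Idt 'a | Vt "('a,'x) tm" "('a,'x) tm"
  | Ht "('a,'x) tm" "('a,'x) tm"

record ('o,'a,'x) pres =
  base :: "('o,'a) cat1"
  gens :: "'x set"
  gsrc :: "'x \<Rightarrow> 'a"
  gtgt :: "'x \<Rightarrow> 'a"
  ginv :: bool
  grel :: "(('a,'x) tm \<times> ('a,'x) tm) set"

inductive wt :: "('o,'a,'x) pres \<Rightarrow> ('a,'x) tm \<Rightarrow> 'a \<Rightarrow> 'a \<Rightarrow> bool" for P where
  wt_At: "x \<in> gens P \<Longrightarrow> wt P (At x) (gsrc P x) (gtgt P x)"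
| wt_Iv: "ginv P \<Longrightarrow> x \<in> gens P \<Longrightarrow> wt P (Iv x) (gtgt P x) (gsrc P x)"
| wt_Id: "f \<in> ar (base P) \<Longrightarrow> wt P (Idt f) f f"
| wt_V: "wt P a f g \<Longrightarrow> wt P b g h \<Longrightarrow> wt P (Vt b a) f h"
| wt_H: "wt P a f g \<Longrightarrow> wt P b h k \<Longrightarrow> cod (base P) f = dom (base P) h \<Longrightarrow>
           wt P (Ht b a) (cmp (base P) h f) (cmp (base P) k g)"

inductive eqv :: "('o,'a,'x) pres \<Rightarrow> ('a,'x) tm \<Rightarrow> ('a,'x) tm \<Rightarrow> bool" for P where
  e_refl: "wt P a f g \<Longrightarrow> eqv P a a"
| e_sym: "eqv P a b \<Longrightarrow> eqv P b a"
| e_trans: "eqv P a b \<Longrightarrow> eqv P b c \<Longrightarrow> eqv P a c"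
| e_congV: "eqv P a a' \<Longrightarrow> eqv P b b' \<Longrightarrow> wt P (Vt b a) f g \<Longrightarrow> eqv P (Vt b a) (Vt b' a')"
| e_congH: "eqv P a a' \<Longrightarrow> eqv P b b' \<Longrightarrow> wt P (Ht b a) f g \<Longrightarrow> eqv P (Ht b a) (Ht b' a')"
| e_rel: "(a, b) \<in> grel P \<Longrightarrow> wt P a f g \<Longrightarrow> wt P b f g \<Longrightarrow> eqv P a b"
| e_vassoc: "wt P (Vt c (Vt b a)) f g \<Longrightarrow> eqv P (Vt c (Vt b a)) (Vt (Vt c b) a)"
| e_vidl: "wt P a f g \<Longrightarrow> eqv P (Vt (Idt g) a) a"
| e_vidr: "wt P a f g \<Longrightarrow> eqv P (Vt a (Idt f)) a"
| e_hassoc: "wt P (Ht c (Ht b a)) f g \<Longrightarrow> eqv P (Ht c (Ht b a)) (Ht (Ht c b) a)"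
| e_hidl: "wt P a f g \<Longrightarrow> eqv P (Ht (Idt (idn (base P) (cod (base P) f))) a) a"
| e_hidr: "wt P a f g \<Longrightarrow> eqv P (Ht a (Idt (idn (base P) (dom (base P) f)))) a"
| e_hidid: "wt P (Ht (Idt g) (Idt f)) h k \<Longrightarrow> eqv P (Ht (Idt g) (Idt f)) (Idt (cmp (base P) g f))"
| e_interchange: "wt P (Ht (Vt d c) (Vt b a)) f g \<Longrightarrow>
     eqv P (Ht (Vt d c) (Vt b a)) (Vt (Ht d b) (Ht c a))"
| e_invl: "ginv P \<Longrightarrow> x \<in> gens P \<Longrightarrow> eqv P (Vt (Iv x) (At x)) (Idt (gsrc P x))"
| e_invr: "ginv P \<Longrightarrow> x \<in> gens P \<Longrightarrow> eqv P (Vt (At x) (Iv x)) (Idt (gtgt P x))"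

definition cls :: "('o,'a,'x) pres \<Rightarrow> ('a,'x) tm \<Rightarrow> ('a,'x) tm set" where
  "cls P a = {b. eqv P a b}"

definition gen2 :: "('o,'a,'x) pres \<Rightarrow> ('o,'a,('a,'x) tm set) cat2" where
  "gen2 P = \<lparr> ob = ob (base P), ar = ar (base P), dom = dom (base P), cod = cod (base P),
     idn = idn (base P), cmp = cmp (base P),
     cl = {cls P a | a f g. wt P a f g},
     s2 = (\<lambda>A. SOME f. \<exists>a\<in>A. \<exists>g. wt P a f g),
     t2 = (\<lambda>A. SOME g. \<exists>a\<in>A. \<exists>f. wt P a f g),
     id2 = (\<lambda>f. cls P (Idt f)),
     vc = (\<lambda>B A. cls P (Vt (SOME b. b \<in> B) (SOME a. a \<in> A))),
     hc = (\<lambda>B A. cls P (Ht (SOME b. b \<in> B) (SOME a. a \<in> A))) \<rparr>"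

text \<open>A morphism of the free category is a pair (x, es): a start vertex and a path
  of edges listed in the order of traversal (so s0 d0 is (1, [d0, s0])).\<close>
record ('v,'e,'t) computad =
  cv   :: "'v set"
  ce   :: "'e set"
  esrc :: "'e \<Rightarrow> 'v"
  etgt :: "'e \<Rightarrow> 'v"
  ct   :: "'t set"
  csrc :: "'t \<Rightarrow> 'v \<times> 'e list"
  ctgt :: "'t \<Rightarrow> 'v \<times> 'e list"

fun chain :: "('v,'e,'t) computad \<Rightarrow> 'v \<Rightarrow> 'e list \<Rightarrow> bool" where
  "chain h x [] = True"
| "chain h x (e # es) = (e \<in> ce h \<and> esrc h e = x \<and> chain h (etgt h e) es)"

fun pend :: "('v,'e,'t) computad \<Rightarrow> 'v \<Rightarrow> 'e list \<Rightarrow> 'v" where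
  "pend h x [] = x"
| "pend h x (e # es) = pend h (etgt h e) es"

definition pathcat :: "('v,'e,'t) computad \<Rightarrow> ('v, 'v \<times> 'e list) cat1" where
  "pathcat h = \<lparr> ob = cv h, ar = {(x, es). x \<in> cv h \<and> chain h x es},
     dom = fst, cod = (\<lambda>(x, es). pend h x es), idn = (\<lambda>x. (x, [])),
     cmp = (\<lambda>(y, gs) (x, fs). (x, fs @ gs)) \<rparr>"

definition is_computad :: "('v,'e,'t) computad \<Rightarrow> bool" where
  "is_computad h \<longleftrightarrow> (\<forall>e\<in>ce h. esrc h e \<in> cv h \<and> etgt h e \<in> cv h) \<and>
     (\<forall>t\<in>ct h. csrc h t \<in> ar (pathcat h) \<and> ctgt h t \<in> ar (pathcat h) \<and>
        dom (pathcat h) (csrc h t) = dom (pathcat h) (ctgt h t) \<and>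
        cod (pathcat h) (csrc h t) = cod (pathcat h) (ctgt h t))"

definition F2 :: "('v,'e,'t) computad \<Rightarrow> ('v, 'v \<times> 'e list, ('v \<times> 'e list, 't) tm set) cat2" where
  "F2 h = gen2 \<lparr> base = pathcat h, gens = ct h, gsrc = csrc h, gtgt = ctgt h,
                 ginv = False, grel = {} \<rparr>"

definition M2 :: "('o,'a,'c) cat2 \<Rightarrow> ('o,'a,'a \<times> 'a) cat2" where
  "M2 C = \<lparr> ob = ob C, ar = ar C, dom = dom C, cod = cod C, idn = idn C, cmp = cmp C,
     cl = {(s2 C c, t2 C c) | c. c \<in> cl C},
     s2 = fst, t2 = snd, id2 = (\<lambda>f. (f, f)),
     vc = (\<lambda>B A. (fst A, snd B)),
     hc = (\<lambda>B A. (cmp C (fst B) (fst A), cmp C (snd B) (snd A))) \<rparr>"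

text \<open>L_2 C: freely adjoin inverses to all 2-cells of C, keeping the
  compositions of C.\<close>
definition L2 :: "('o,'a,'c) cat2 \<Rightarrow> ('o,'a,('a,'c) tm set) cat2" where
  "L2 C = gen2 \<lparr> base = cat1.truncate C, gens = cl C, gsrc = s2 C, gtgt = t2 C, ginv = True,
     grel = {(Vt (At b) (At a), At (vc C b a)) | a b. a \<in> cl C \<and> b \<in> cl C \<and> t2 C a = s2 C b}
          \<union> {(Ht (At b) (At a), At (hc C b a)) | a b. a \<in> cl C \<and> b \<in> cl C \<and>
                 cod C (s2 C a) = dom C (s2 C b)}
          \<union> {(At (id2 C f), Idt f) | f. f \<in> ar C} \<rparr>"

datatype gob = G0 | G1 | G2
datatype gar = Gd | Gd0 | Gd1 | Gs0
datatype gcl = Gn0 | Gn1 | Gth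

definition gcomp :: "(gob, gar, gcl) computad" where
  "gcomp = \<lparr> cv = UNIV, ce = UNIV,
     esrc = (\<lambda>e. case e of Gd \<Rightarrow> G0 | Gd0 \<Rightarrow> G1 | Gd1 \<Rightarrow> G1 | Gs0 \<Rightarrow> G2),
     etgt = (\<lambda>e. case e of Gd \<Rightarrow> G1 | Gd0 \<Rightarrow> G2 | Gd1 \<Rightarrow> G2 | Gs0 \<Rightarrow> G1),
     ct = UNIV,
     csrc = (\<lambda>t. case t of Gn0 \<Rightarrow> (G1, [Gd0, Gs0]) | Gn1 \<Rightarrow> (G1, []) | Gth \<Rightarrow> (G0, [Gd, Gd1])),
     ctgt = (\<lambda>t. case t of Gn0 \<Rightarrow> (G1, []) | Gn1 \<Rightarrow> (G1, [Gd1, Gs0]) | Gth \<Rightarrow> (G0, [Gd, Gd0])) \<rparr>"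

end

theory Submission
  imports Defs
begin

(* Count the generating 2-cells in a 2-cell expression, formal inverses negatively. Every
   2-category axiom preserves the count, and so do the relations of L2 once a 2-cell of a free
   2-category is counted through any of its representatives. The loop n1 d . n0 d . s0 theta on
   s0 d1 d has count 3 and the identity count 0, so neither F2 g nor L2 F2 g is locally thin.
   In a free 2-category counts are non-negative, and a 2-cell of count 0 has equal source and
   target; so a locally thin free 2-category has no pair of 2-cells f => g and g => f with f ~= g.
   But M2 F2 g has such a pair between d and s0 d1 d. *)

fun weight :: "('x \<Rightarrow> int) \<Rightarrow> ('a,'x) tm \<Rightarrow> int" where
  "weight w (At x) = w x"
| "weight w (Iv x) = - w x"
| "weight w (Idt f) = 0"
| "weight w (Vt b a) = weight w b + weight w a"
| "weight w (Ht b a) = weight w b + weight w a"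

lemma eqv_weight:
  assumes "eqv P a b" and "\<forall>(l, r)\<in>grel P. weight w l = weight w r"
  shows "weight w a = weight w b"
  using assms by (induction rule: eqv.induct) auto

lemma weight_nonneg:
  "wt P a f g \<Longrightarrow> \<not> ginv P \<Longrightarrow> 0 \<le> weight (\<lambda>_. 1) a \<and> (weight (\<lambda>_. 1) a = 0 \<longrightarrow> f = g)"
  by (induction rule: wt.induct) auto

(* Associativity is demanded unconditionally; path categories satisfy it and it spares side conditions. *)
definition cat1_laws :: "('o,'a,'m) cat1_scheme \<Rightarrow> bool" where
  "cat1_laws C \<longleftrightarrow>
    (\<forall>f\<in>ar C. dom C f \<in> ob C \<and> cod C f \<in> ob C \<and>
       cmp C (idn C (cod C f)) f = f \<and> cmp C f (idn C (dom C f)) = f) \<and>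
    (\<forall>x\<in>ob C. idn C x \<in> ar C \<and> dom C (idn C x) = x \<and> cod C (idn C x) = x) \<and>
    (\<forall>f\<in>ar C. \<forall>g\<in>ar C. cod C f = dom C g \<longrightarrow>
       cmp C g f \<in> ar C \<and> dom C (cmp C g f) = dom C f \<and> cod C (cmp C g f) = cod C g) \<and>
    (\<forall>f g k. cmp C k (cmp C g f) = cmp C (cmp C k g) f)"

definition wf_pres :: "('o,'a,'x) pres \<Rightarrow> bool" where
  "wf_pres P \<longleftrightarrow> cat1_laws (base P) \<and>
    (\<forall>x\<in>gens P. gsrc P x \<in> ar (base P) \<and> gtgt P x \<in> ar (base P) \<and>
       dom (base P) (gsrc P x) = dom (base P) (gtgt P x) \<and>
       cod (base P) (gsrc P x) = cod (base P) (gtgt P x))"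

lemma cat1_lawsD:
  assumes "cat1_laws C"
  shows cat1_laws_dom_cod: "f \<in> ar C \<Longrightarrow> dom C f \<in> ob C \<and> cod C f \<in> ob C"
    and cat1_laws_idn_left: "f \<in> ar C \<Longrightarrow> cmp C (idn C (cod C f)) f = f"
    and cat1_laws_idn_right: "f \<in> ar C \<Longrightarrow> cmp C f (idn C (dom C f)) = f"
    and cat1_laws_idn: "x \<in> ob C \<Longrightarrow> idn C x \<in> ar C \<and> dom C (idn C x) = x \<and> cod C (idn C x) = x"
    and cat1_laws_cmp: "f \<in> ar C \<Longrightarrow> g \<in> ar C \<Longrightarrow> cod C f = dom C g \<Longrightarrow>
       cmp C g f \<in> ar C \<and> dom C (cmp C g f) = dom C f \<and> cod C (cmp C g f) = cod C g"
    and cat1_laws_assoc: "cmp C k (cmp C g f) = cmp C (cmp C k g) f"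
  using assms unfolding cat1_laws_def by blast+

inductive_cases wt_AtE: "wt P (At x) f g"
inductive_cases wt_IvE: "wt P (Iv x) f g"
inductive_cases wt_IdtE: "wt P (Idt h) f g"
inductive_cases wt_VtE: "wt P (Vt b a) f g"
inductive_cases wt_HtE: "wt P (Ht b a) f g"

lemma wt_parallel_arrows:
  assumes "wt P a f g" and "wf_pres P"
  shows "f \<in> ar (base P) \<and> g \<in> ar (base P) \<and>
    dom (base P) f = dom (base P) g \<and> cod (base P) f = cod (base P) g"
  using assms
proof (induction rule: wt.induct)
  case (wt_H a f g b h k)
  then have C: "cat1_laws (base P)" by (simp add: wf_pres_def)
  from wt_H have "f \<in> ar (base P)" "g \<in> ar (base P)" "h \<in> ar (base P)" "k \<in> ar (base P)"
    "cod (base P) g = dom (base P) k" by auto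
  from wt_H this show ?case using cat1_laws_cmp[OF C] by auto
qed (auto simp: wf_pres_def)

lemma wt_unique_boundary: "wt P a f g \<Longrightarrow> wt P a f' g' \<Longrightarrow> f' = f \<and> g' = g"
proof (induction arbitrary: f' g' rule: wt.induct)
  case (wt_V a f g b h)
  from wt_V.prems obtain m where "wt P a f' m" "wt P b m g'" by (rule wt_VtE)
  with wt_V.IH show ?case by blast
next
  case (wt_H a f g b h k)
  from wt_H.prems obtain f1 g1 h1 k1 where "f' = cmp (base P) h1 f1" "g' = cmp (base P) k1 g1"
    "wt P a f1 g1" "wt P b h1 k1" by (rule wt_HtE)
  with wt_H.IH show ?case by blast
qed (auto elim: wt_AtE wt_IvE wt_IdtE)

lemma wt_Ht_assoc:
  assumes P: "wf_pres P" and "wt P (Ht c (Ht b a)) f g"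
  shows "wt P (Ht (Ht c b) a) f g"
proof -
  let ?C = "base P"
  have C: "cat1_laws ?C" using P by (simp add: wf_pres_def)
  from assms(2) obtain f1 g1 h1 k1 h0 k0 where
    a: "wt P a f1 g1" and b: "wt P b h1 k1" and c: "wt P c h0 k0"
    and ab: "cod ?C f1 = dom ?C h1" and bc: "cod ?C (cmp ?C h1 f1) = dom ?C h0"
    and fg: "f = cmp ?C h0 (cmp ?C h1 f1)" "g = cmp ?C k0 (cmp ?C k1 g1)"
    by (elim wt_HtE) blast
  note ar = wt_parallel_arrows[OF a P] wt_parallel_arrows[OF b P] wt_parallel_arrows[OF c P]
  have bc': "cod ?C h1 = dom ?C h0" using bc ab ar cat1_laws_cmp[OF C] by simp
  have "wt P (Ht c b) (cmp ?C h0 h1) (cmp ?C k0 k1)" using wt_H[OF b c bc'] .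
  moreover have "cod ?C f1 = dom ?C (cmp ?C h0 h1)" using ab bc' ar cat1_laws_cmp[OF C] by simp
  ultimately have "wt P (Ht (Ht c b) a) (cmp ?C (cmp ?C h0 h1) f1) (cmp ?C (cmp ?C k0 k1) g1)"
    using wt_H[OF a] by blast
  then show ?thesis using fg cat1_laws_assoc[OF C] by simp
qed

lemma wt_Ht_Idt_left:
  assumes P: "wf_pres P" and a: "wt P a f g"
  shows "wt P (Ht (Idt (idn (base P) (cod (base P) f))) a) f g"
proof -
  let ?C = "base P" and ?i = "idn (base P) (cod (base P) f)"
  have C: "cat1_laws ?C" using P by (simp add: wf_pres_def)
  note ar = wt_parallel_arrows[OF a P]
  have "?i \<in> ar ?C" "dom ?C ?i = cod ?C f"
    using ar cat1_laws_dom_cod[OF C] cat1_laws_idn[OF C] by auto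
  then have "wt P (Ht (Idt ?i) a) (cmp ?C ?i f) (cmp ?C ?i g)" using wt_H[OF a wt_Id] by simp
  moreover have "cmp ?C ?i f = f" "cmp ?C ?i g = g" using ar cat1_laws_idn_left[OF C] by metis+
  ultimately show ?thesis by (simp only:)
qed

lemma wt_Ht_Idt_right:
  assumes P: "wf_pres P" and a: "wt P a f g"
  shows "wt P (Ht a (Idt (idn (base P) (dom (base P) f)))) f g"
proof -
  let ?C = "base P" and ?i = "idn (base P) (dom (base P) f)"
  have C: "cat1_laws ?C" using P by (simp add: wf_pres_def)
  note ar = wt_parallel_arrows[OF a P]
  have "?i \<in> ar ?C" "cod ?C ?i = dom ?C f"
    using ar cat1_laws_dom_cod[OF C] cat1_laws_idn[OF C] by auto
  then have "wt P (Ht a (Idt ?i)) (cmp ?C f ?i) (cmp ?C g ?i)" using wt_H[OF wt_Id a] by simp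
  moreover have "cmp ?C f ?i = f" "cmp ?C g ?i = g" using ar cat1_laws_idn_right[OF C] by metis+
  ultimately show ?thesis by (simp only:)
qed

lemma wt_Ht_Idt_Idt:
  assumes P: "wf_pres P" and "wt P (Ht (Idt g) (Idt f)) h k"
  shows "wt P (Idt (cmp (base P) g f)) h k"
  using assms cat1_laws_cmp[of "base P" f g] by (auto simp: wf_pres_def elim!: wt_HtE wt_IdtE intro: wt_Id)

lemma wt_interchange:
  assumes P: "wf_pres P" and "wt P (Ht (Vt d c) (Vt b a)) f g"
  shows "wt P (Vt (Ht d b) (Ht c a)) f g"
proof -
  let ?C = "base P"
  from assms(2) obtain f0 g0 h0 k0 p q where
    a: "wt P a f0 p" and b: "wt P b p g0" and c: "wt P c h0 q" and d: "wt P d q k0"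
    and ac: "cod ?C f0 = dom ?C h0" and fg: "f = cmp ?C h0 f0" "g = cmp ?C k0 g0"
    by (elim wt_HtE wt_VtE) blast
  have "cod ?C p = dom ?C q"
    using ac wt_parallel_arrows[OF a P] wt_parallel_arrows[OF c P] by simp
  then show ?thesis using wt_V[OF wt_H[OF a c ac] wt_H[OF b d]] fg by simp
qed

lemma eqv_wt:
  assumes "eqv P a b" and P: "wf_pres P"
  shows "\<exists>f g. wt P a f g \<and> wt P b f g"
  using assms(1)
proof (induction rule: eqv.induct)
  case (e_trans a b c)
  then show ?case using wt_unique_boundary by metis
next
  case (e_congV a a' b b' f g)
  from e_congV.hyps(3) obtain m where "wt P a f m" "wt P b m g" by (rule wt_VtE)
  with e_congV.IH have "wt P a' f m" "wt P b' m g" using wt_unique_boundary by metis+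
  then have "wt P (Vt b' a') f g" by (rule wt_V)
  with e_congV.hyps(3) show ?case by blast
next
  case (e_congH a a' b b' f g)
  from e_congH.hyps(3) obtain f0 g0 h0 k0 where fg: "f = cmp (base P) h0 f0" "g = cmp (base P) k0 g0"
    and ab: "wt P a f0 g0" "wt P b h0 k0" and c: "cod (base P) f0 = dom (base P) h0"
    by (rule wt_HtE)
  from ab e_congH.IH have "wt P a' f0 g0" "wt P b' h0 k0" using wt_unique_boundary by metis+
  then have "wt P (Ht b' a') f g" using wt_H c fg by simp
  with e_congH.hyps(3) show ?case by blast
next
  case (e_vassoc c b a f g)
  then obtain m n where "wt P a f m" "wt P b m n" "wt P c n g" by (elim wt_VtE)
  then have "wt P (Vt (Vt c b) a) f g" by (blast intro: wt_V)
  with e_vassoc.hyps show ?case by blast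
next
  case (e_vidl a f g)
  then show ?case using wt_parallel_arrows[OF _ P] wt_Id wt_V by metis
next
  case (e_vidr a f g)
  then show ?case using wt_parallel_arrows[OF _ P] wt_Id wt_V by metis
next
  case (e_hassoc c b a f g)
  then show ?case using wt_Ht_assoc[OF P] by blast
next
  case (e_hidl a f g)
  then show ?case using wt_Ht_Idt_left[OF P] by blast
next
  case (e_hidr a f g)
  then show ?case using wt_Ht_Idt_right[OF P] by blast
next
  case (e_hidid g f h k)
  then show ?case using wt_Ht_Idt_Idt[OF P] by blast
next
  case (e_interchange d c b a f g)
  then show ?case using wt_interchange[OF P] by blast
next
  case (e_invl x)
  then show ?case using P unfolding wf_pres_def by (meson wt_At wt_Id wt_Iv wt_V)
next
  case (e_invr x)
  then show ?case using P unfolding wf_pres_def by (meson wt_At wt_Id wt_Iv wt_V)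
qed blast+

lemma cls_self: "wt P a f g \<Longrightarrow> a \<in> cls P a"
  unfolding cls_def by (blast intro: e_refl)

lemma wt_cls_member:
  assumes "wf_pres P" "wt P a f g" "b \<in> cls P a"
  shows "wt P b f g"
proof -
  from assms(3) have "eqv P a b" by (simp add: cls_def)
  then obtain f1 g1 where "wt P a f1 g1" "wt P b f1 g1" using eqv_wt assms(1) by blast
  with wt_unique_boundary[OF assms(2)] show ?thesis by blast
qed

lemma eqv_if_cls_eq: "cls P a = cls P b \<Longrightarrow> wt P b f g \<Longrightarrow> eqv P a b"
  using cls_self[of P b] by (auto simp: cls_def)

lemma gen2_simps:
  "ob (gen2 P) = ob (base P)" "ar (gen2 P) = ar (base P)" "dom (gen2 P) = dom (base P)"
  "cod (gen2 P) = cod (base P)" "idn (gen2 P) = idn (base P)" "cmp (gen2 P) = cmp (base P)"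
  "cl (gen2 P) = {cls P a | a f g. wt P a f g}"
  "s2 (gen2 P) = (\<lambda>A. SOME f. \<exists>a\<in>A. \<exists>g. wt P a f g)"
  "t2 (gen2 P) = (\<lambda>A. SOME g. \<exists>a\<in>A. \<exists>f. wt P a f g)"
  "id2 (gen2 P) = (\<lambda>f. cls P (Idt f))"
  "vc (gen2 P) = (\<lambda>B A. cls P (Vt (SOME b. b \<in> B) (SOME a. a \<in> A)))"
  "hc (gen2 P) = (\<lambda>B A. cls P (Ht (SOME b. b \<in> B) (SOME a. a \<in> A)))"
  unfolding gen2_def by simp_all

lemma cls_in_gen2: "wt P a f g \<Longrightarrow> cls P a \<in> cl (gen2 P)"
  unfolding gen2_simps by blast

lemma s2_t2_gen2_cls:
  assumes "wf_pres P" "wt P a f g"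
  shows "s2 (gen2 P) (cls P a) = f" "t2 (gen2 P) (cls P a) = g"
proof -
  have "\<exists>b\<in>cls P a. \<exists>g'. wt P b f g'" "\<exists>b\<in>cls P a. \<exists>f'. wt P b f' g"
    using cls_self[OF assms(2)] assms(2) by blast+
  moreover have "f' = f \<and> g' = g" if "b \<in> cls P a" "wt P b f' g'" for b f' g'
    using wt_unique_boundary[OF wt_cls_member[OF assms that(1)] that(2)] .
  ultimately show "s2 (gen2 P) (cls P a) = f" "t2 (gen2 P) (cls P a) = g"
    unfolding gen2_simps by (auto intro!: some_equality)
qed

lemma cl_gen2_cases:
  assumes "wf_pres P" "X \<in> cl (gen2 P)"
  obtains a where "X = cls P a" "wt P a (s2 (gen2 P) X) (t2 (gen2 P) X)"
proof -
  from assms(2) obtain a f g where X: "X = cls P a" and a: "wt P a f g"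
    unfolding gen2_simps by blast
  show ?thesis using that[OF X] a s2_t2_gen2_cls[OF assms(1) a] X by simp
qed

lemma loc_thin_gen2_eqv:
  assumes P: "wf_pres P" and thin: "loc_thin (gen2 P)" and a: "wt P a f g" and b: "wt P b f g"
  shows "eqv P a b"
proof -
  have "s2 (gen2 P) (cls P a) = s2 (gen2 P) (cls P b)" "t2 (gen2 P) (cls P a) = t2 (gen2 P) (cls P b)"
    using s2_t2_gen2_cls[OF P a] s2_t2_gen2_cls[OF P b] by simp_all
  then have "cls P a = cls P b"
    using thin cls_in_gen2[OF a] cls_in_gen2[OF b] unfolding loc_thin_def by blast
  then show ?thesis using eqv_if_cls_eq[OF _ b] by blast
qed

lemma loc_thin_gen2_weight_eq:
  assumes "wf_pres P" "\<forall>(l, r)\<in>grel P. weight w l = weight w r" "loc_thin (gen2 P)"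
    and "wt P a f g" "wt P b f g"
  shows "weight w a = weight w b"
  using eqv_weight[OF loc_thin_gen2_eqv[OF assms(1,3-5)] assms(2)] .

lemma loc_thin_free_gen2_no_cycles:
  assumes "wf_pres P" "grel P = {}" "\<not> ginv P" "loc_thin (gen2 P)"
    and a: "wt P a f g" and b: "wt P b g f"
  shows "f = g"
proof -
  have "f \<in> ar (base P)" using wt_parallel_arrows[OF a assms(1)] by blast
  then have "weight (\<lambda>_. 1) (Vt b a) = weight (\<lambda>_. 1) (Idt f)"
    using loc_thin_gen2_weight_eq[OF assms(1) _ assms(4) wt_V[OF a b] wt_Id] assms(2) by simp
  then show ?thesis using weight_nonneg[OF a assms(3)] weight_nonneg[OF b assms(3)] by simp
qed

definition inv_pres :: "('o,'a,'c) cat2 \<Rightarrow> ('o,'a,'c) pres" where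
  "inv_pres C = \<lparr> base = cat1.truncate C, gens = cl C, gsrc = s2 C, gtgt = t2 C, ginv = True,
     grel = {(Vt (At b) (At a), At (vc C b a)) | a b. a \<in> cl C \<and> b \<in> cl C \<and> t2 C a = s2 C b}
          \<union> {(Ht (At b) (At a), At (hc C b a)) | a b. a \<in> cl C \<and> b \<in> cl C \<and>
                 cod C (s2 C a) = dom C (s2 C b)}
          \<union> {(At (id2 C f), Idt f) | f. f \<in> ar C} \<rparr>"

lemma L2_eq_gen2_inv_pres: "L2 C = gen2 (inv_pres C)"
  unfolding L2_def inv_pres_def ..

lemma base_inv_pres_gen2: "base (inv_pres (gen2 P)) = base P"
  by (simp add: inv_pres_def cat1.truncate_def gen2_simps)

lemma wf_pres_inv_pres_gen2:
  assumes P: "wf_pres P"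
  shows "wf_pres (inv_pres (gen2 P))"
proof -
  have "s2 (gen2 P) X \<in> ar (base P) \<and> t2 (gen2 P) X \<in> ar (base P) \<and>
     dom (base P) (s2 (gen2 P) X) = dom (base P) (t2 (gen2 P) X) \<and>
     cod (base P) (s2 (gen2 P) X) = cod (base P) (t2 (gen2 P) X)" if "X \<in> cl (gen2 P)" for X
    using cl_gen2_cases[OF P that] wt_parallel_arrows[OF _ P] by metis
  with P show ?thesis unfolding wf_pres_def base_inv_pres_gen2 by (simp add: inv_pres_def)
qed

(* Well defined on the 2-cells of a free 2-category, where eqv preserves the count. *)
definition cls_weight :: "('a,'x) tm set \<Rightarrow> int" where
  "cls_weight A = weight (\<lambda>_. 1) (SOME a. a \<in> A)"

lemma wt_some_cls:
  assumes P: "wf_pres P" and A: "A \<in> cl (gen2 P)"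
  shows "wt P (SOME a. a \<in> A) (s2 (gen2 P) A) (t2 (gen2 P) A)"
proof -
  obtain a where "A = cls P a" and a: "wt P a (s2 (gen2 P) A) (t2 (gen2 P) A)"
    using cl_gen2_cases[OF P A] .
  moreover have "(SOME b. b \<in> cls P a) \<in> cls P a" using cls_self[OF a] by (rule someI)
  ultimately show ?thesis using wt_cls_member[OF P a] by simp
qed

lemma cls_weight_cls:
  assumes "wf_pres P" "grel P = {}" "wt P a f g"
  shows "cls_weight (cls P a) = weight (\<lambda>_. 1) a"
proof -
  have "(SOME b. b \<in> cls P a) \<in> cls P a" using cls_self[OF assms(3)] by (rule someI)
  then have "eqv P a (SOME b. b \<in> cls P a)" by (simp add: cls_def)
  then show ?thesis using eqv_weight assms(2) unfolding cls_weight_def by (metis empty_iff)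
qed

lemma cls_weight_vc:
  assumes P: "wf_pres P" "grel P = {}" and A: "A \<in> cl (gen2 P)" and B: "B \<in> cl (gen2 P)"
    and AB: "t2 (gen2 P) A = s2 (gen2 P) B"
  shows "cls_weight (vc (gen2 P) B A) = cls_weight B + cls_weight A"
proof -
  have "wt P (Vt (SOME b. b \<in> B) (SOME a. a \<in> A)) (s2 (gen2 P) A) (t2 (gen2 P) B)"
    using wt_V[OF wt_some_cls[OF P(1) A]] wt_some_cls[OF P(1) B] AB by simp
  from cls_weight_cls[OF P this] show ?thesis by (simp add: gen2_simps cls_weight_def)
qed

lemma cls_weight_hc:
  assumes P: "wf_pres P" "grel P = {}" and A: "A \<in> cl (gen2 P)" and B: "B \<in> cl (gen2 P)"
    and AB: "cod (gen2 P) (s2 (gen2 P) A) = dom (gen2 P) (s2 (gen2 P) B)"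
  shows "cls_weight (hc (gen2 P) B A) = cls_weight B + cls_weight A"
proof -
  have "\<exists>f g. wt P (Ht (SOME b. b \<in> B) (SOME a. a \<in> A)) f g"
    using wt_H[OF wt_some_cls[OF P(1) A] wt_some_cls[OF P(1) B]] AB by (auto simp: gen2_simps)
  then obtain f g where "wt P (Ht (SOME b. b \<in> B) (SOME a. a \<in> A)) f g" by blast
  from cls_weight_cls[OF P this] show ?thesis by (simp add: gen2_simps cls_weight_def)
qed

lemma cls_weight_id2:
  assumes P: "wf_pres P" "grel P = {}" and f: "f \<in> ar (gen2 P)"
  shows "cls_weight (id2 (gen2 P) f) = 0"
proof -
  have "wt P (Idt f) f f" using f by (simp add: gen2_simps wt_Id)
  from cls_weight_cls[OF P this] show ?thesis by (simp add: gen2_simps)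
qed

lemma inv_pres_gen2_weight_balanced:
  assumes "wf_pres P" "grel P = {}"
  shows "\<forall>(l, r)\<in>grel (inv_pres (gen2 P)). weight cls_weight l = weight cls_weight r"
  using cls_weight_vc[OF assms] cls_weight_hc[OF assms] cls_weight_id2[OF assms]
  by (auto simp: inv_pres_def)

lemma loc_thin_L2_gen2_weight_eq:
  assumes P: "wf_pres P" "grel P = {}" and thin: "loc_thin (L2 (gen2 P))"
    and a: "wt P a f g" and b: "wt P b f g"
  shows "weight (\<lambda>_. 1) a = weight (\<lambda>_. 1) b"
proof -
  let ?Q = "inv_pres (gen2 P)"
  have At: "wt ?Q (At (cls P c)) f g" if "wt P c f g" for c
    using wt_At[of "cls P c" ?Q] cls_in_gen2[OF that] s2_t2_gen2_cls[OF P(1) that]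
    by (simp add: inv_pres_def)
  have "loc_thin (gen2 ?Q)" using thin by (simp add: L2_eq_gen2_inv_pres)
  from loc_thin_gen2_weight_eq[OF wf_pres_inv_pres_gen2[OF P(1)]
      inv_pres_gen2_weight_balanced[OF P] this At[OF a] At[OF b]]
  show ?thesis using cls_weight_cls[OF P a] cls_weight_cls[OF P b] by simp
qed

lemma loc_thin_M2: "loc_thin (M2 C)"
  unfolding loc_thin_def M2_def by (auto simp: prod_eq_iff)

lemma M2_cellI: "c \<in> cl C \<Longrightarrow> (s2 C c, t2 C c) \<in> cl (M2 C)"
  unfolding M2_def by auto

lemma iso2_loc_thin:
  assumes iso: "iso2 C D" and thin: "loc_thin C"
    and bdry: "\<And>c. c \<in> cl C \<Longrightarrow> s2 C c \<in> ar C \<and> t2 C c \<in> ar C"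
  shows "loc_thin D"
  unfolding loc_thin_def
proof (intro ballI impI)
  fix X Y assume XY: "X \<in> cl D" "Y \<in> cl D" "s2 D X = s2 D Y \<and> t2 D X = t2 D Y"
  from iso obtain F0 F1 Fc where
    F1: "bij_betw F1 (ar C) (ar D)" and Fc: "bij_betw Fc (cl C) (cl D)" and
    st: "\<forall>a\<in>cl C. s2 D (Fc a) = F1 (s2 C a) \<and> t2 D (Fc a) = F1 (t2 C a)"
    unfolding iso2_def by blast
  from Fc XY obtain x y where xy: "x \<in> cl C" "y \<in> cl C" "X = Fc x" "Y = Fc y"
    unfolding bij_betw_def by blast
  have "F1 (s2 C x) = F1 (s2 C y)" "F1 (t2 C x) = F1 (t2 C y)" using st xy XY(3) by auto
  then have "s2 C x = s2 C y" "t2 C x = t2 C y"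
    using F1 bdry[OF xy(1)] bdry[OF xy(2)] unfolding bij_betw_def inj_on_def by blast+
  then show "X = Y" using thin xy unfolding loc_thin_def by blast
qed

lemma chain_append: "chain h x (fs @ gs) \<longleftrightarrow> chain h x fs \<and> chain h (pend h x fs) gs"
  by (induction fs arbitrary: x) auto

lemma pend_append: "pend h x (fs @ gs) = pend h (pend h x fs) gs"
  by (induction fs arbitrary: x) auto

lemma pend_in_cv: "is_computad h \<Longrightarrow> x \<in> cv h \<Longrightarrow> chain h x fs \<Longrightarrow> pend h x fs \<in> cv h"
  by (induction fs arbitrary: x) (auto simp: is_computad_def)

lemma pathcat_simps:
  "ob (pathcat h) = cv h"
  "p \<in> ar (pathcat h) \<longleftrightarrow> fst p \<in> cv h \<and> chain h (fst p) (snd p)"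
  "dom (pathcat h) p = fst p"
  "cod (pathcat h) p = pend h (fst p) (snd p)"
  "idn (pathcat h) x = (x, [])"
  "cmp (pathcat h) q p = (fst p, snd p @ snd q)"
  unfolding pathcat_def by (auto split: prod.splits)

lemma cat1_laws_pathcat:
  assumes "is_computad h"
  shows "cat1_laws (pathcat h)"
  unfolding cat1_laws_def pathcat_simps using pend_in_cv[OF assms]
  by (auto simp: chain_append pend_append pathcat_simps)

definition free_pres :: "('v,'e,'t) computad \<Rightarrow> ('v, 'v \<times> 'e list, 't) pres" where
  "free_pres h = \<lparr> base = pathcat h, gens = ct h, gsrc = csrc h, gtgt = ctgt h,
     ginv = False, grel = {} \<rparr>"

lemma F2_eq_gen2_free_pres: "F2 h = gen2 (free_pres h)"
  by (simp add: F2_def free_pres_def)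

lemma wf_pres_free_pres: "is_computad h \<Longrightarrow> wf_pres (free_pres h)"
  unfolding wf_pres_def free_pres_def using cat1_laws_pathcat by (auto simp: is_computad_def)

lemma F2_cell_boundaries:
  assumes "is_computad h" "c \<in> cl (F2 h)"
  shows "s2 (F2 h) c \<in> ar (F2 h) \<and> t2 (F2 h) c \<in> ar (F2 h)"
proof -
  have Q: "wf_pres (free_pres h)" using wf_pres_free_pres[OF assms(1)] .
  obtain a where "wt (free_pres h) a (s2 (F2 h) c) (t2 (F2 h) c)"
    using cl_gen2_cases[OF Q] assms(2) unfolding F2_eq_gen2_free_pres by blast
  from wt_parallel_arrows[OF this Q] show ?thesis
    unfolding F2_eq_gen2_free_pres gen2_simps by blast
qed

lemma iso2_free_no_cycles:
  assumes h: "is_computad h" and iso: "iso2 C (F2 h)" and thin: "loc_thin C"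
    and bdry: "\<And>c. c \<in> cl C \<Longrightarrow> s2 C c \<in> ar C \<and> t2 C c \<in> ar C"
    and c: "c \<in> cl C" and c': "c' \<in> cl C" and cc': "s2 C c' = t2 C c" "t2 C c' = s2 C c"
  shows "s2 C c = t2 C c"
proof -
  let ?Q = "free_pres h"
  have Q: "wf_pres ?Q" using wf_pres_free_pres[OF h] .
  from iso obtain F0 F1 Fc where
    F1: "bij_betw F1 (ar C) (ar (F2 h))" and Fc: "bij_betw Fc (cl C) (cl (F2 h))" and
    st: "\<forall>a\<in>cl C. s2 (F2 h) (Fc a) = F1 (s2 C a) \<and> t2 (F2 h) (Fc a) = F1 (t2 C a)"
    unfolding iso2_def by blast
  have cell: "\<exists>a. wt ?Q a (F1 (s2 C x)) (F1 (t2 C x))" if "x \<in> cl C" for x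
  proof -
    have "Fc x \<in> cl (gen2 ?Q)" using bij_betw_apply[OF Fc that] by (simp add: F2_eq_gen2_free_pres)
    then obtain a where "wt ?Q a (s2 (gen2 ?Q) (Fc x)) (t2 (gen2 ?Q) (Fc x))"
      by (rule cl_gen2_cases[OF Q])
    with st[rule_format, OF that] show ?thesis unfolding F2_eq_gen2_free_pres by auto
  qed
  obtain a b where "wt ?Q a (F1 (s2 C c)) (F1 (t2 C c))" "wt ?Q b (F1 (t2 C c)) (F1 (s2 C c))"
    using cell[OF c] cell[OF c'] cc' by auto
  moreover have "loc_thin (gen2 ?Q)"
    using iso2_loc_thin[OF iso thin bdry] by (simp add: F2_eq_gen2_free_pres)
  ultimately have "F1 (s2 C c) = F1 (t2 C c)"
    using loc_thin_free_gen2_no_cycles[OF Q] by (simp add: free_pres_def)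
  then show ?thesis using F1 bdry[OF c] unfolding bij_betw_def inj_on_def by blast
qed

lemma is_computad_gcomp: "is_computad gcomp"
  unfolding is_computad_def pathcat_simps by (auto simp: gcomp_def split: gcl.splits gar.splits)

definition s0_theta :: "(gob \<times> gar list, gcl) tm" where
  "s0_theta = Ht (Idt (G2, [Gs0])) (At Gth)"

definition n0_d :: "(gob \<times> gar list, gcl) tm" where
  "n0_d = Ht (At Gn0) (Idt (G0, [Gd]))"

definition n1_d :: "(gob \<times> gar list, gcl) tm" where
  "n1_d = Ht (At Gn1) (Idt (G0, [Gd]))"

lemma wt_gcomp_whiskered:
  "wt (free_pres gcomp) s0_theta (G0, [Gd, Gd1, Gs0]) (G0, [Gd, Gd0, Gs0])"
  "wt (free_pres gcomp) n0_d (G0, [Gd, Gd0, Gs0]) (G0, [Gd])"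
  "wt (free_pres gcomp) n1_d (G0, [Gd]) (G0, [Gd, Gd1, Gs0])"
  unfolding s0_theta_def n0_d_def n1_d_def
  using wt_H[OF wt_At wt_Id, of Gth "free_pres gcomp" "(G2, [Gs0])"]
    wt_H[OF wt_Id wt_At, of "(G0, [Gd])" "free_pres gcomp" Gn0]
    wt_H[OF wt_Id wt_At, of "(G0, [Gd])" "free_pres gcomp" Gn1]
  by (simp_all add: free_pres_def gcomp_def pathcat_simps)

lemma weight_gcomp_loop: "weight (\<lambda>_. 1) (Vt n1_d (Vt n0_d s0_theta)) = 3"
  by (simp add: s0_theta_def n0_d_def n1_d_def)

lemma wt_gcomp_loop:
  "wt (free_pres gcomp) (Vt n1_d (Vt n0_d s0_theta)) (G0, [Gd, Gd1, Gs0]) (G0, [Gd, Gd1, Gs0])"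
  using wt_gcomp_whiskered by (blast intro: wt_V)

lemma M2_F2_cell_boundaries:
  assumes "is_computad h" "c \<in> cl (M2 (F2 h))"
  shows "s2 (M2 (F2 h)) c \<in> ar (M2 (F2 h)) \<and> t2 (M2 (F2 h)) c \<in> ar (M2 (F2 h))"
  using assms(2) F2_cell_boundaries[OF assms(1)] unfolding M2_def by auto

lemma F2_gcomp_not_loc_thin: "\<not> loc_thin (F2 gcomp)"
proof
  assume "loc_thin (F2 gcomp)"
  let ?s = "(G0, [Gd, Gd1, Gs0])"
  have "wt (free_pres gcomp) (Idt ?s) ?s ?s"
    by (rule wt_Id) (simp add: free_pres_def gcomp_def pathcat_simps)
  with \<open>loc_thin (F2 gcomp)\<close> have "weight (\<lambda>_. 1) (Vt n1_d (Vt n0_d s0_theta)) = 0"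
    using loc_thin_gen2_weight_eq[OF wf_pres_free_pres[OF is_computad_gcomp] _ _ wt_gcomp_loop]
    by (simp add: F2_eq_gen2_free_pres free_pres_def)
  then show False using weight_gcomp_loop by simp
qed

lemma L2_F2_gcomp_not_loc_thin: "\<not> loc_thin (L2 (F2 gcomp))"
proof
  assume "loc_thin (L2 (F2 gcomp))"
  let ?s = "(G0, [Gd, Gd1, Gs0])"
  have "wt (free_pres gcomp) (Idt ?s) ?s ?s"
    by (rule wt_Id) (simp add: free_pres_def gcomp_def pathcat_simps)
  with \<open>loc_thin (L2 (F2 gcomp))\<close> have "weight (\<lambda>_. 1) (Vt n1_d (Vt n0_d s0_theta)) = 0"
    using loc_thin_L2_gen2_weight_eq[OF wf_pres_free_pres[OF is_computad_gcomp] _ _ wt_gcomp_loop]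
    by (simp add: F2_eq_gen2_free_pres free_pres_def)
  then show False using weight_gcomp_loop by simp
qed

lemma M2_F2_gcomp_not_free:
  "\<not> (\<exists>h :: ('v,'e,'t) computad. is_computad h \<and> iso2 (M2 (F2 gcomp)) (F2 h))"
proof
  assume "\<exists>h :: ('v,'e,'t) computad. is_computad h \<and> iso2 (M2 (F2 gcomp)) (F2 h)"
  then obtain h :: "('v,'e,'t) computad" where h: "is_computad h" and iso: "iso2 (M2 (F2 gcomp)) (F2 h)"
    by blast
  let ?M = "M2 (F2 gcomp)" and ?Q = "free_pres gcomp"
  let ?d = "(G0, [Gd])" and ?s = "(G0, [Gd, Gd1, Gs0])"
  have Q: "wf_pres ?Q" using wf_pres_free_pres[OF is_computad_gcomp] .
  have cell: "(f, g) \<in> cl ?M" if "wt ?Q a f g" for a f g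
    using M2_cellI[OF cls_in_gen2[OF that]] s2_t2_gen2_cls[OF Q that]
    by (simp add: F2_eq_gen2_free_pres)
  have "(?d, ?s) \<in> cl ?M" using cell wt_gcomp_whiskered(3) .
  moreover have "(?s, ?d) \<in> cl ?M" using cell wt_V[OF wt_gcomp_whiskered(1,2)] .
  ultimately have "?d = ?s"
    using iso2_free_no_cycles[OF h iso loc_thin_M2 M2_F2_cell_boundaries[OF is_computad_gcomp],
        of "(?d, ?s)" "(?s, ?d)"]
    by (simp add: M2_def)
  then show False by simp
qed

theorem mainTheorem17:
  shows "\<not> (\<exists>h :: ('v,'e,'t) computad. is_computad h \<and> iso2 (M2 (F2 gcomp)) (F2 h))
         \<and> \<not> loc_thin (F2 gcomp) \<and> \<not> loc_thin (L2 (F2 gcomp))"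
  using M2_F2_gcomp_not_free F2_gcomp_not_loc_thin L2_F2_gcomp_not_loc_thin by blast

end
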